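(* Let $n\ge 4$, $\nu=2^n$, $\sigma^2>0$ and $0<\rho<1$. Suppose the vector of treatment effects $\tau=(\tau(i))_{i\in\Omega}$ is a zero-mean Gaussian random vector with $\operatorname{cov}(\tau(i),\tau(i'))=\sigma^2\rho^{\,\#\{k:\ i_k\neq i'_k\}}$ for all $i,i'\in\Omega$ (equivalently $\operatorname{cov}(\tau)=\sigma^2\mathbf R^{\otimes n}$ in lexicographic order, where $\mathbf R$ is the $2\times 2$ matrix with diagonal entries $1$ and off-diagonal entries $\rho$). Then for every $s\in\{0,1,2\}$, every $1\le l\le n-2$ and every $j=(j_1,\dots,j_n)\in\Omega_{sl}$, $$\operatorname{var}\big(\beta(j_1\cdots j_n)\big)=\sigma^2\nu^{-1}(1+\rho)^{\,n-l-s}(1-\rho)^{\,l}.$$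
   Context: Let $\Omega=\{0,1\}^n$. The conditional effects are defined from treatment effects $\tau(i)$, $i\in\Omega$, by $$\beta(j)=\nu^{-1}\sum_{i\in\Omega} g(j_1,j_2;i_1,i_2)\,g(j_3,j_4;i_3,i_4)\prod_{k=5}^{n}(-1)^{j_k i_k}\,\tau(i),\qquad j\in\Omega,$$ where $g(0,b;a,a')=(-1)^{b a'}$ and $g(1,b;a,a')=\sqrt2\,(-1)^{a}\,\mathbf 1[a'=b]$ for $a,a',b\in\{0,1\}$. (Here $F_1,F_2$ and $F_3,F_4$ are two pairs of conditional/conditioned factors: effects involving $F_1$ are defined conditionally on each level of $F_2$, and those involving $F_3$ conditionally on each level of $F_4$.) For $1\le l\le n-2$ define $\Omega_{0l}=\{j: j_1=j_3=0,\ \text{exactly } l \text{ of } j_2,j_4,j_5,\dots,j_n \text{ equal } 1\}$; $\Omega_{1l}=\{j: j_1=1,\ j_2\in\{0,1\},\ j_3=0,\ \text{exactly } l-1 \text{ of } j_4,\dots,j_n \text{ equal }1\}\cup\{j: j_3=1,\ j_4\in\{0,1\},\ j_1=0,\ \text{exactly } l-1 \text{ of } j_2,j_5,\dots,j_n \text{ equal }1\}$; $\Omega_{2l}=\{j: j_1=j_3=1,\ j_2,j_4\in\{0,1\},\ \text{exactly } l-2 \text{ of } j_5,\dots,j_n \text{ equal }1\}$ (empty when $l=1$). *)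

theory Defs
  imports "HOL-Probability.Probability"
begin

definition Omega :: "nat \<Rightarrow> (nat \<Rightarrow> nat) set" where
  "Omega n = ({1..n} \<rightarrow>\<^sub>E {0, 1})"

definition hamming :: "nat \<Rightarrow> (nat \<Rightarrow> nat) \<Rightarrow> (nat \<Rightarrow> nat) \<Rightarrow> nat" where
  "hamming n i i' = card {k \<in> {1..n}. i k \<noteq> i' k}"

definition g :: "nat \<Rightarrow> nat \<Rightarrow> nat \<Rightarrow> nat \<Rightarrow> real" where
  "g j b a a' = (if j = 0 then (-1) ^ (b * a')
                 else sqrt 2 * (-1) ^ a * (if a' = b then 1 else 0))"

definition coef :: "nat \<Rightarrow> (nat \<Rightarrow> nat) \<Rightarrow> (nat \<Rightarrow> nat) \<Rightarrow> real" where
  "coef n j i = (1 / 2 ^ n) * g (j 1) (j 2) (i 1) (i 2) * g (j 3) (j 4) (i 3) (i 4)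
       * (\<Prod>k\<in>{5..n}. (-1) ^ (j k * i k))"

definition beta :: "nat \<Rightarrow> ((nat \<Rightarrow> nat) \<Rightarrow> 'a \<Rightarrow> real) \<Rightarrow> (nat \<Rightarrow> nat) \<Rightarrow> 'a \<Rightarrow> real" where
  "beta n tau j = (\<lambda>\<omega>. \<Sum>i\<in>Omega n. coef n j i * tau i \<omega>)"

definition ones :: "(nat \<Rightarrow> nat) \<Rightarrow> nat set \<Rightarrow> nat" where
  "ones j K = card {k \<in> K. j k = 1}"

definition Omega_sl :: "nat \<Rightarrow> nat \<Rightarrow> nat \<Rightarrow> (nat \<Rightarrow> nat) set" where
  "Omega_sl n s l =
    (if s = 0 then {j \<in> Omega n. j 1 = 0 \<and> j 3 = 0 \<and> ones j ({2, 4} \<union> {5..n}) = l}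
     else if s = 1 then
       {j \<in> Omega n. j 1 = 1 \<and> j 3 = 0 \<and> ones j {4..n} + 1 = l}
       \<union> {j \<in> Omega n. j 3 = 1 \<and> j 1 = 0 \<and> ones j ({2} \<union> {5..n}) + 1 = l}
     else if s = 2 then
       {j \<in> Omega n. j 1 = 1 \<and> j 3 = 1 \<and> ones j {5..n} + 2 = l}
     else {})"

definition covariance :: "'a measure \<Rightarrow> ('a \<Rightarrow> real) \<Rightarrow> ('a \<Rightarrow> real) \<Rightarrow> real" where
  "covariance M X Y =
     (\<integral>\<omega>. (X \<omega> - (\<integral>x. X x \<partial>M)) * (Y \<omega> - (\<integral>x. Y x \<partial>M)) \<partial>M)"

end

theory Submission
  imports Defs
begin

text \<open>
  Since the \<open>\<tau>(i)\<close> are centred, \<open>var \<beta>(j)\<close> is the quadratic form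
  \<open>\<Sum>\<^sub>i \<Sum>\<^sub>i' c(j,i) c(j,i') \<sigma>\<^sup>2 \<rho>\<^bsup>d(i,i')\<^esup>\<close> with \<open>d\<close> the Hamming distance.
  Both the coefficient \<open>c(j,i)\<close> and \<open>\<rho>\<^bsup>d(i,i')\<^esup>\<close> are products over the
  coordinates (the factor \<open>g\<close> splits into a weight on \<open>i\<^sub>1\<close> and one on \<open>i\<^sub>2\<close>),
  so the quadratic form is \<open>\<nu>\<^sup>-\<^sup>2\<close> times a product of \<open>2\<times>2\<close> forms \<open>u\<^sup>T R u\<close>.
  These are \<open>2(1 \<plusminus> \<rho>)\<close> for the sign vectors \<open>(1, \<plusminus>1)\<close>, while a conditional pair
  contributes \<open>4(1 - \<rho>) \<cdot> 1\<close>; collecting the exponents gives the formula.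
\<close>

lemma integrable_mult_of_square_integrable:
  fixes f g :: "'a \<Rightarrow> real"
  assumes [measurable]: "f \<in> borel_measurable M" "g \<in> borel_measurable M"
    and f2: "integrable M (\<lambda>x. (f x)\<^sup>2)" and g2: "integrable M (\<lambda>x. (g x)\<^sup>2)"
  shows "integrable M (\<lambda>x. f x * g x)"
proof (rule Bochner_Integration.integrable_bound)
  show "integrable M (\<lambda>x. (f x)\<^sup>2 + (g x)\<^sup>2)"
    using f2 g2 by simp
  have "\<bar>f x * g x\<bar> \<le> (f x)\<^sup>2 + (g x)\<^sup>2" for x
  proof -
    have "2 * \<bar>f x\<bar> * \<bar>g x\<bar> \<le> (f x)\<^sup>2 + (g x)\<^sup>2"
      using sum_squares_bound[of "\<bar>f x\<bar>" "\<bar>g x\<bar>"] by simp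
    moreover have "0 \<le> \<bar>f x\<bar> * \<bar>g x\<bar>" by simp
    ultimately show ?thesis unfolding abs_mult by linarith
  qed
  then show "AE x in M. norm (f x * g x) \<le> norm ((f x)\<^sup>2 + (g x)\<^sup>2)"
    by simp
qed measurable

lemma (in prob_space) variance_sum_centered:
  fixes X :: "'i \<Rightarrow> 'a \<Rightarrow> real"
  assumes "finite I"
    and meas: "\<And>i. i \<in> I \<Longrightarrow> X i \<in> borel_measurable M"
    and sq_int: "\<And>i. i \<in> I \<Longrightarrow> integrable M (\<lambda>\<omega>. (X i \<omega>)\<^sup>2)"
    and centered: "\<And>i. i \<in> I \<Longrightarrow> expectation (X i) = 0"
  shows "variance (\<lambda>\<omega>. \<Sum>i\<in>I. c i * X i \<omega>)
       = (\<Sum>i\<in>I. \<Sum>i'\<in>I. c i * c i' * expectation (\<lambda>\<omega>. X i \<omega> * X i' \<omega>))"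
proof -
  have "expectation (\<lambda>\<omega>. \<Sum>i\<in>I. c i * X i \<omega>) = 0"
    using meas sq_int centered by (simp add: square_integrable_imp_integrable)
  moreover have "(\<Sum>i\<in>I. c i * X i \<omega>)\<^sup>2
      = (\<Sum>i\<in>I. \<Sum>i'\<in>I. c i * c i' * (X i \<omega> * X i' \<omega>))" for \<omega>
    unfolding power2_eq_square sum_product by (simp add: mult_ac)
  ultimately show ?thesis
    using assms by (simp add: integrable_mult_of_square_integrable)
qed

lemma sum_PiE_sum_PiE_prod:
  fixes F :: "'a \<Rightarrow> 'b \<Rightarrow> 'b \<Rightarrow> 'c::comm_semiring_1"
  assumes "finite A" "finite B"
  shows "(\<Sum>i\<in>A \<rightarrow>\<^sub>E B. \<Sum>i'\<in>A \<rightarrow>\<^sub>E B. \<Prod>k\<in>A. F k (i k) (i' k))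
       = (\<Prod>k\<in>A. \<Sum>a\<in>B. \<Sum>b\<in>B. F k a b)"
proof -
  have "(\<Sum>i\<in>A \<rightarrow>\<^sub>E B. \<Sum>i'\<in>A \<rightarrow>\<^sub>E B. \<Prod>k\<in>A. F k (i k) (i' k))
      = (\<Sum>i\<in>A \<rightarrow>\<^sub>E B. \<Prod>k\<in>A. \<Sum>b\<in>B. F k (i k) b)"
    using prod_sum_PiE[of A "\<lambda>_. B", symmetric] assms by (intro sum.cong) auto
  also have "\<dots> = (\<Prod>k\<in>A. \<Sum>a\<in>B. \<Sum>b\<in>B. F k a b)"
    using prod_sum_PiE[of A "\<lambda>_. B" "\<lambda>k a. \<Sum>b\<in>B. F k a b", symmetric] assms by auto
  finally show ?thesis .
qed

definition R_form :: "real \<Rightarrow> (nat \<Rightarrow> real) \<Rightarrow> real" where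
  "R_form rho u = (\<Sum>a\<in>{0,1}. \<Sum>b\<in>{0,1}. u a * u b * (if a \<noteq> b then rho else 1))"

lemma R_form_eq: "R_form rho u = (u 0)\<^sup>2 + (u 1)\<^sup>2 + 2 * rho * u 0 * u 1"
  by (simp add: R_form_def power2_eq_square algebra_simps)

definition cond_weight :: "nat \<Rightarrow> nat \<Rightarrow> real" where
  "cond_weight c a = (if c = 0 then 1 else sqrt 2 * (-1) ^ a)"

definition conditioned_weight :: "nat \<Rightarrow> nat \<Rightarrow> nat \<Rightarrow> real" where
  "conditioned_weight c b a = (if c = 0 then (-1) ^ (b * a) else if a = b then 1 else 0)"

lemma g_eq_weights: "g c b a a' = cond_weight c a * conditioned_weight c b a'"
  by (simp add: g_def cond_weight_def conditioned_weight_def)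

definition weight :: "(nat \<Rightarrow> nat) \<Rightarrow> nat \<Rightarrow> nat \<Rightarrow> real" where
  "weight j k =
    (if k = 1 then cond_weight (j 1) else if k = 2 then conditioned_weight (j 1) (j 2)
     else if k = 3 then cond_weight (j 3) else if k = 4 then conditioned_weight (j 3) (j 4)
     else (\<lambda>a. (-1) ^ (j k * a)))"

lemma atLeastAtMost_1_split:
  "4 \<le> n \<Longrightarrow> {1..n} = insert 1 (insert 2 (insert 3 (insert 4 {5..n::nat})))"
  by auto

lemma coef_eq_prod_weight:
  assumes "4 \<le> n"
  shows "coef n j i = 1 / 2 ^ n * (\<Prod>k\<in>{1..n}. weight j k (i k))"
proof -
  have "(\<Prod>k\<in>{5..n}. weight j k (i k)) = (\<Prod>k\<in>{5..n}. (-1) ^ (j k * i k))"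
    by (rule prod.cong) (auto simp: weight_def)
  then show ?thesis
    unfolding coef_def atLeastAtMost_1_split[OF assms] g_eq_weights
    by (simp add: weight_def mult_ac)
qed

lemma power_hamming:
  "r ^ hamming n i i' = (\<Prod>k\<in>{1..n}. if i k \<noteq> i' k then r else (1::real))"
  by (simp add: hamming_def prod.If_cases Int_def)

lemma sum_coef_hamming:
  assumes "4 \<le> n"
  shows "(\<Sum>i\<in>Omega n. \<Sum>i'\<in>Omega n. coef n j i * coef n j i' * rho ^ hamming n i i')
       = (1 / 2 ^ n)\<^sup>2 * (\<Prod>k\<in>{1..n}. R_form rho (weight j k))"
proof -
  have "(\<Sum>i\<in>Omega n. \<Sum>i'\<in>Omega n. coef n j i * coef n j i' * rho ^ hamming n i i')
      = (1 / 2 ^ n)\<^sup>2 * (\<Sum>i\<in>Omega n. \<Sum>i'\<in>Omega n. \<Prod>k\<in>{1..n}.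
          weight j k (i k) * weight j k (i' k) * (if i k \<noteq> i' k then rho else 1))"
    unfolding coef_eq_prod_weight[OF assms] power_hamming sum_distrib_left
    by (intro sum.cong refl) (simp add: prod.distrib power2_eq_square)
  also have "\<dots> = (1 / 2 ^ n)\<^sup>2 * (\<Prod>k\<in>{1..n}. R_form rho (weight j k))"
    unfolding Omega_def R_form_def by (subst sum_PiE_sum_PiE_prod) auto
  finally show ?thesis .
qed

definition pair_order :: "nat \<Rightarrow> nat \<Rightarrow> nat" where
  "pair_order c b = (if c = 0 then b else 1)"

lemma R_form_pair:
  assumes "c \<in> {0, 1}" "b \<in> {0, 1}"
  shows "R_form rho (cond_weight c) * R_form rho (conditioned_weight c b)
       = 4 * (1 + rho) ^ (2 - c - pair_order c b) * (1 - rho) ^ pair_order c b"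
  using assms
  by (auto simp: R_form_eq cond_weight_def conditioned_weight_def pair_order_def
      power2_eq_square algebra_simps)

lemma R_form_sign:
  assumes "e \<in> {0, 1}"
  shows "R_form rho (\<lambda>a. (-1) ^ (e * a)) = 2 * (1 + rho) ^ (1 - e) * (1 - rho) ^ e"
  using assms by (auto simp: R_form_eq algebra_simps)

lemma ones_eq_sum:
  assumes "finite K" "\<And>k. k \<in> K \<Longrightarrow> j k \<in> {0, 1}"
  shows "ones j K = (\<Sum>k\<in>K. j k)"
proof -
  have "ones j K = (\<Sum>k\<in>K. if j k = 1 then 1 else 0)"
    using assms(1) by (simp add: ones_def sum.If_cases Collect_conj_eq Int_commute)
  also have "\<dots> = (\<Sum>k\<in>K. j k)"
    using assms(2) by (intro sum.cong) auto
  finally show ?thesis .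
qed

lemma prod_R_form_sign:
  assumes "finite K" "\<And>k. k \<in> K \<Longrightarrow> j k \<in> {0, 1}"
  shows "(\<Prod>k\<in>K. R_form rho (\<lambda>a. (-1) ^ (j k * a)))
       = 2 ^ card K * (1 + rho) ^ (card K - ones j K) * (1 - rho) ^ ones j K"
proof -
  have "(\<Prod>k\<in>K. R_form rho (\<lambda>a. (-1) ^ (j k * a)))
      = (\<Prod>k\<in>K. 2 * (1 + rho) ^ (1 - j k) * (1 - rho) ^ j k)"
    using assms(2) by (intro prod.cong refl R_form_sign) auto
  also have "\<dots> = 2 ^ card K * (1 + rho) ^ (\<Sum>k\<in>K. 1 - j k) * (1 - rho) ^ (\<Sum>k\<in>K. j k)"
    by (simp add: prod.distrib power_sum)
  also have "(\<Sum>k\<in>K. 1 - j k) = card K - (\<Sum>k\<in>K. j k)"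
    using assms(2) by (subst sum_subtractf_nat) fastforce+
  finally show ?thesis
    using ones_eq_sum[OF assms] by simp
qed

definition effect_order :: "nat \<Rightarrow> (nat \<Rightarrow> nat) \<Rightarrow> nat" where
  "effect_order n j = pair_order (j 1) (j 2) + pair_order (j 3) (j 4) + ones j {5..n}"

lemma prod_R_form_weight:
  assumes n: "4 \<le> n" and j: "j \<in> Omega n"
  shows "(\<Prod>k\<in>{1..n}. R_form rho (weight j k))
       = 2 ^ n * (1 + rho) ^ (n - (j 1 + j 3) - effect_order n j) * (1 - rho) ^ effect_order n j"
proof -
  have binary: "j k \<in> {0, 1}" if "k \<in> {1..n}" for k
    using j that by (auto simp: Omega_def)
  define p1 p3 m where "p1 = pair_order (j 1) (j 2)" and "p3 = pair_order (j 3) (j 4)"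
    and "m = ones j {5..n}"
  have "m \<le> card {5..n}"
    unfolding m_def ones_def by (rule card_mono) auto
  moreover have "j 1 + p1 \<le> 2" "j 3 + p3 \<le> 2"
    using binary[of 1] binary[of 2] binary[of 3] binary[of 4] n
    by (auto simp: p1_def p3_def pair_order_def)
  ultimately have exponents: "4 + (n - 4) = n"
      "(2 - j 1 - p1) + (2 - j 3 - p3) + (n - 4 - m) = n - (j 1 + j 3) - (p1 + p3 + m)"
    using n by auto
  have order: "effect_order n j = p1 + p3 + m"
    by (simp add: effect_order_def p1_def p3_def m_def)
  have tail: "(\<Prod>k\<in>{5..n}. R_form rho (weight j k))
      = 2 ^ (n - 4) * (1 + rho) ^ (n - 4 - m) * (1 - rho) ^ m"
  proof -
    have "(\<Prod>k\<in>{5..n}. R_form rho (weight j k)) = (\<Prod>k\<in>{5..n}. R_form rho (\<lambda>a. (-1) ^ (j k * a)))"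
      by (intro prod.cong refl) (auto simp: weight_def)
    also have "\<dots> = 2 ^ (n - 4) * (1 + rho) ^ (n - 4 - m) * (1 - rho) ^ m"
      unfolding m_def using binary by (subst prod_R_form_sign) auto
    finally show ?thesis .
  qed
  have "(\<Prod>k\<in>{1..n}. R_form rho (weight j k))
      = (R_form rho (cond_weight (j 1)) * R_form rho (conditioned_weight (j 1) (j 2)))
      * (R_form rho (cond_weight (j 3)) * R_form rho (conditioned_weight (j 3) (j 4)))
      * (\<Prod>k\<in>{5..n}. R_form rho (weight j k))"
    unfolding atLeastAtMost_1_split[OF n] by (simp add: weight_def mult_ac)
  also have "\<dots> = (4 * (1 + rho) ^ (2 - j 1 - p1) * (1 - rho) ^ p1)
      * (4 * (1 + rho) ^ (2 - j 3 - p3) * (1 - rho) ^ p3)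
      * (2 ^ (n - 4) * (1 + rho) ^ (n - 4 - m) * (1 - rho) ^ m)"
    unfolding tail p1_def p3_def using binary n by (simp add: R_form_pair)
  also have "\<dots> = 2 ^ (4 + (n - 4)) * (1 + rho) ^ ((2 - j 1 - p1) + (2 - j 3 - p3) + (n - 4 - m))
      * (1 - rho) ^ (p1 + p3 + m)"
    by (simp add: power_add mult_ac)
  finally show ?thesis
    unfolding exponents order .
qed

lemma Omega_sl_order:
  assumes "4 \<le> n" "j \<in> Omega_sl n s l"
  shows "j \<in> Omega n" "j 1 + j 3 = s" "effect_order n j = l"
proof -
  have j: "j \<in> Omega n"
    using assms(2) by (auto simp: Omega_sl_def split: if_splits)
  then have binary: "j k \<in> {0, 1}" if "k \<in> {1..n}" for k
    using that by (auto simp: Omega_def)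
  have ones_sum: "ones j K = (\<Sum>k\<in>K. j k)" if K: "K \<subseteq> {1..n}" for K
  proof (rule ones_eq_sum)
    show "finite K"
      using K by (rule finite_subset) simp
    show "j k \<in> {0, 1}" if "k \<in> K" for k
      using K binary that by blast
  qed
  have "{2, 4} \<union> {5..n} = insert 2 (insert 4 {5..n})" "{2} \<union> {5..n} = insert 2 {5..n}"
      "{4..n} = insert 4 {5..n}"
    using assms(1) by auto
  then have "ones j ({2, 4} \<union> {5..n}) = j 2 + j 4 + ones j {5..n}"
      "ones j ({2} \<union> {5..n}) = j 2 + ones j {5..n}" "ones j {4..n} = j 4 + ones j {5..n}"
    using assms(1) by (simp_all add: ones_sum)
  then show "j \<in> Omega n" "j 1 + j 3 = s" "effect_order n j = l"
    using assms binary[of 1] binary[of 3] j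
    by (auto simp: Omega_sl_def effect_order_def pair_order_def split: if_splits)
qed

lemma finite_Omega: "finite (Omega n)"
  by (simp add: Omega_def finite_PiE)

theorem theorem1:
  fixes M :: "'a measure" and tau :: "(nat \<Rightarrow> nat) \<Rightarrow> 'a \<Rightarrow> real"
    and n s l :: nat and sigma2 rho :: real and j :: "nat \<Rightarrow> nat"
  assumes "prob_space M"
    and "n \<ge> 4" and "sigma2 > 0" and "0 < rho" and "rho < 1"
    and meas: "\<And>i. i \<in> Omega n \<Longrightarrow> tau i \<in> borel_measurable M"
    and sq_int: "\<And>i. i \<in> Omega n \<Longrightarrow> integrable M (\<lambda>\<omega>. (tau i \<omega>)\<^sup>2)"
    and mean0: "\<And>i. i \<in> Omega n \<Longrightarrow> prob_space.expectation M (tau i) = 0"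
    and cov: "\<And>i i'. i \<in> Omega n \<Longrightarrow> i' \<in> Omega n \<Longrightarrow>
               covariance M (tau i) (tau i') = sigma2 * rho ^ hamming n i i'"
    and "s \<le> 2" and "1 \<le> l" and "l \<le> n - 2"
    and "j \<in> Omega_sl n s l"
  shows "prob_space.variance M (beta n tau j)
           = sigma2 / 2 ^ n * (1 + rho) ^ (n - l - s) * (1 - rho) ^ l"
proof -
  interpret prob_space M by fact
  have second_moment: "expectation (\<lambda>\<omega>. tau i \<omega> * tau i' \<omega>) = sigma2 * rho ^ hamming n i i'"
    if "i \<in> Omega n" "i' \<in> Omega n" for i i'
    using cov[OF that] mean0 that by (simp add: covariance_def)
  have j: "j \<in> Omega n" "j 1 + j 3 = s" "effect_order n j = l"
    using Omega_sl_order \<open>n \<ge> 4\<close> \<open>j \<in> Omega_sl n s l\<close> by blast+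
  have "variance (beta n tau j)
      = (\<Sum>i\<in>Omega n. \<Sum>i'\<in>Omega n. coef n j i * coef n j i' * expectation (\<lambda>\<omega>. tau i \<omega> * tau i' \<omega>))"
    unfolding beta_def using finite_Omega meas sq_int mean0 by (rule variance_sum_centered)
  also have "\<dots> = sigma2 * (\<Sum>i\<in>Omega n. \<Sum>i'\<in>Omega n. coef n j i * coef n j i' * rho ^ hamming n i i')"
    by (simp add: second_moment sum_distrib_left mult_ac)
  also have "\<dots> = sigma2 * ((1 / 2 ^ n)\<^sup>2 * (2 ^ n * (1 + rho) ^ (n - s - l) * (1 - rho) ^ l))"
    unfolding sum_coef_hamming[OF \<open>n \<ge> 4\<close>] prod_R_form_weight[OF \<open>n \<ge> 4\<close> j(1)] j(2,3) ..
  also have "\<dots> = sigma2 / 2 ^ n * (1 + rho) ^ (n - l - s) * (1 - rho) ^ l"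
    by (simp add: power2_eq_square add.commute)
  finally show ?thesis .
qed

end
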